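(* Let $k$ be an even function on $\mathbb R$ whose Fourier transform is nonnegative and supported in $[-1,1]$, and $K_\alpha(r)=k(r)(e^{i\alpha r}+e^{-i\alpha r})$. For every $\varepsilon>0$ there is $C_\varepsilon$ such that for all $\alpha\in\mathbb R$ and $t\ge1$, $$\Big|\int_{\mathbb R}r\tanh(\pi r)K_\alpha(r-t)\,dr\Big|+\Big|\int_{\mathbb R}r\tanh(\pi r)K_\alpha(r+t)\,dr\Big|\le C_\varepsilon\,t\,e^{-|\alpha|(\frac12-\varepsilon)}.$$ In particular, for $\alpha=2\beta\log T-C$ with $0<\beta\le1$ and $t\asymp T$, these integrals are $O(t^{1+\varepsilon-\beta})$.
   Context: Fourier transform convention $\hat k(u)=\int e^{iur}k(r)\,dr$; $k$ extends to an entire function, rapidly decreasing in horizontal strips. *)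

theory Defs
  imports "HOL-Analysis.Analysis"
begin

definition fourier_tr :: "(real \<Rightarrow> complex) \<Rightarrow> real \<Rightarrow> complex" where
  "fourier_tr k u = (LINT r|lborel. exp (\<i> * complex_of_real (u * r)) * k r)"

text \<open>Standing assumption: k extends to an entire function, rapidly decreasing
  in horizontal strips.\<close>
definition entire_rapid_decr_strips :: "(real \<Rightarrow> complex) \<Rightarrow> bool" where
  "entire_rapid_decr_strips k \<longleftrightarrow>
     (\<exists>F::complex \<Rightarrow> complex. F holomorphic_on UNIV \<and>
        (\<forall>x::real. F (complex_of_real x) = k x) \<and>
        (\<forall>(a::real) (N::nat). \<exists>C::real. \<forall>z. \<bar>Im z\<bar> \<le> a \<longrightarrow>
            norm (F z) \<le> C / (1 + \<bar>Re z\<bar>) ^ N))"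

definition K_alpha :: "(real \<Rightarrow> complex) \<Rightarrow> real \<Rightarrow> real \<Rightarrow> complex" where
  "K_alpha k \<alpha> r = k r * (exp (\<i> * complex_of_real (\<alpha> * r)) + exp (- \<i> * complex_of_real (\<alpha> * r)))"

definition tanh_int :: "(real \<Rightarrow> complex) \<Rightarrow> real \<Rightarrow> real \<Rightarrow> complex" where
  "tanh_int k \<alpha> s = (LINT r|lborel. complex_of_real (r * tanh (pi * r)) * K_alpha k \<alpha> (r + s))"

end

theory Submission
  imports Defs "HOL-Complex_Analysis.Cauchy_Integral_Theorem"
begin

(*
  The integrals tanh_int k alpha s = \<integral> r tanh(\<pi> r) K_alpha(r + s) dr are estimated by moving
  the line of integration off the real axis.  Writing F for the entire extension of k, the
  integrand is a sum of two terms z tanh(\<pi> z) F(z + s) e^{\<plusminus>i\<alpha>z} (times unimodular constants).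
  The function z tanh(\<pi> z) is holomorphic in the strip |Im z| < 1/2, and F decays like
  (1 + |Re z|)^-3 in horizontal strips, so by Cauchy's theorem the integral over \<real> equals the
  integral over \<real> + i y for any |y| < 1/2.  Choosing the sign of y according to the sign of
  \<alpha>, the factor e^{i\<alpha>z} becomes e^{-|\<alpha>| |y|}, and the remaining integral is O(1 + |s|).
*)

section \<open>The Cauchy density and truncated integrals\<close>

lemma cauchy_density:
  shows "integrable lborel (\<lambda>x::real. 1 / (1 + x^2))"
    and "(LINT x|lborel. 1 / (1 + x^2 :: real)) = pi"
proof -
  have deriv: "\<And>x. DERIV arctan x :> 1 / (1 + x^2)"
    by (rule DERIV_arctan[THEN DERIV_cong]) (simp add: field_simps)
  have cont: "\<And>x::real. isCont (\<lambda>x. 1 / (1 + x^2)) x"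
    by (intro continuous_intros) (simp add: add_pos_nonneg[THEN less_imp_neq[symmetric]])
  have lim_bot: "((arctan \<circ> real_of_ereal) \<longlongrightarrow> - (pi/2)) (at_right (-\<infinity>))"
    by (simp add: ereal_tendsto_simps tendsto_arctan_at_bot)
  have lim_top: "((arctan \<circ> real_of_ereal) \<longlongrightarrow> pi/2) (at_left \<infinity>)"
    by (simp add: ereal_tendsto_simps tendsto_arctan_at_top)
  have "set_integrable lborel (einterval (-\<infinity>) \<infinity>) (\<lambda>x::real. 1 / (1 + x^2))"
       "(LBINT x=-\<infinity>..\<infinity>. 1 / (1 + x^2 :: real)) = pi/2 - (- (pi/2))"
    using interval_integral_FTC_nonneg[where F = arctan and a = "-\<infinity>" and b = \<infinity>
        and f = "\<lambda>x::real. 1 / (1 + x^2)" and A = "- (pi/2)" and B = "pi/2"]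
      deriv cont lim_bot lim_top by auto
  then show "integrable lborel (\<lambda>x::real. 1 / (1 + x^2))"
    and "(LINT x|lborel. 1 / (1 + x^2 :: real)) = pi"
    by (simp_all add: set_integrable_def einterval_eq_UNIV interval_lebesgue_integral_def
        set_lebesgue_integral_def)
qed

lemma cauchy_density_shift:
  shows "integrable lborel (\<lambda>x::real. 1 / (1 + (x + s)^2))"
    and "(LINT x|lborel. 1 / (1 + (x + s)^2 :: real)) = pi"
proof -
  have eq: "(\<lambda>x::real. 1 / (1 + (x + s)^2)) = (\<lambda>x. (\<lambda>u. 1 / (1 + u^2)) (s + 1 * x))"
    by (simp add: add.commute)
  show "integrable lborel (\<lambda>x::real. 1 / (1 + (x + s)^2))"
    unfolding eq by (rule lborel_integrable_real_affine[OF cauchy_density(1)]) simp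
  show "(LINT x|lborel. 1 / (1 + (x + s)^2 :: real)) = pi"
    unfolding eq using lborel_integral_real_affine[of 1 "\<lambda>u::real. 1 / (1 + u^2)" s]
      cauchy_density(2) by simp
qed

text \<open>For an integrable function the integrals over [-n, n] converge to the full integral
  (dominated convergence); this is how the contour shift passes from rectangles to lines.\<close>
lemma tendsto_integral_symmetric_truncation:
  fixes f :: "real \<Rightarrow> 'a::{banach, second_countable_topology}"
  assumes f: "integrable lborel f"
  shows "(\<lambda>n::nat. LINT x:{-real n..real n}|lborel. f x) \<longlonglongrightarrow> (LINT x|lborel. f x)"
  unfolding set_lebesgue_integral_def
proof (rule integral_dominated_convergence[where w = "\<lambda>x. norm (f x)"])
  show "f \<in> borel_measurable lborel" "integrable lborel (\<lambda>x. norm (f x))"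
    using f by auto
  show "\<And>i::nat. (\<lambda>x. indicator {-real i..real i} x *\<^sub>R f x) \<in> borel_measurable lborel"
    using f by (intro borel_measurable_scaleR) auto
  show "\<And>i::nat. AE x in lborel. norm (indicator {-real i..real i} x *\<^sub>R f x) \<le> norm (f x)"
    by (intro AE_I2) (auto simp: indicator_def)
  show "AE x in lborel. (\<lambda>i::nat. indicator {-real i..real i} x *\<^sub>R f x) \<longlonglongrightarrow> f x"
  proof (intro AE_I2)
    fix x :: real
    obtain N :: nat where "\<bar>x\<bar> \<le> real N" using real_arch_simple by blast
    then have "\<forall>i\<ge>N. indicator {-real i..real i} x *\<^sub>R f x = f x"
      by (auto simp: indicator_def)
    then show "(\<lambda>i::nat. indicator {-real i..real i} x *\<^sub>R f x) \<longlonglongrightarrow> f x"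
      by (intro tendsto_eventually) (auto simp: eventually_sequentially)
  qed
qed

section \<open>Shifting a line integral inside a strip\<close>

lemma integrable_horizontal_line:
  fixes G :: "complex \<Rightarrow> complex"
  assumes cont: "continuous_on S G" and line: "\<And>x. of_real x + \<i> * of_real y \<in> S"
    and bound: "\<And>x. norm (G (of_real x + \<i> * of_real y)) \<le> B / (1 + x^2)"
  shows "integrable lborel (\<lambda>x. G (of_real x + \<i> * of_real y))"
proof (rule Bochner_Integration.integrable_bound)
  show "integrable lborel (\<lambda>x::real. B * (1 / (1 + x^2)))"
    using cauchy_density(1) by (rule integrable_mult_right)
  have "continuous_on UNIV (\<lambda>x::real. G (of_real x + \<i> * of_real y))"
    by (rule continuous_on_compose2[OF cont]) (auto intro!: continuous_intros line)
  then show "(\<lambda>x. G (of_real x + \<i> * of_real y)) \<in> borel_measurable lborel"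
    by (simp add: borel_measurable_continuous_onI)
  show "AE x in lborel. norm (G (of_real x + \<i> * of_real y)) \<le> norm (B * (1 / (1 + x^2)))"
  proof (intro AE_I2)
    fix x :: real
    have "B / (1 + x^2) \<le> norm (B * (1 / (1 + x^2)))"
      by (simp add: divide_right_mono)
    then show "norm (G (of_real x + \<i> * of_real y)) \<le> norm (B * (1 / (1 + x^2)))"
      using bound[of x] by linarith
  qed
qed

lemma horizontal_segment_integral_primitive:
  fixes G P :: "complex \<Rightarrow> complex"
  assumes prim: "\<And>x. (P has_field_derivative G (of_real x + \<i> * of_real y)) (at (of_real x + \<i> * of_real y))"
    and intg: "integrable lborel (\<lambda>x. G (of_real x + \<i> * of_real y))" and ab: "a \<le> b"
  shows "(LINT x:{a..b}|lborel. G (of_real x + \<i> * of_real y))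
           = P (of_real b + \<i> * of_real y) - P (of_real a + \<i> * of_real y)"
proof -
  have set_intg: "set_integrable lborel {a..b} (\<lambda>x. G (of_real x + \<i> * of_real y))"
    unfolding set_integrable_def by (rule integrable_mult_indicator) (auto intro: intg)
  have "((\<lambda>x. G (of_real x + \<i> * of_real y)) has_integral
          (P (of_real b + \<i> * of_real y) - P (of_real a + \<i> * of_real y))) {a..b}"
  proof (rule fundamental_theorem_of_calculus[OF ab])
    fix x assume "x \<in> {a..b}"
    have "((\<lambda>w. w + \<i> * of_real y) has_field_derivative 1) (at (of_real x))"
      by (auto intro!: derivative_eq_intros)
    from DERIV_chain2[OF prim this]
    have "((\<lambda>w. P (w + \<i> * of_real y)) has_field_derivative G (of_real x + \<i> * of_real y)) (at (of_real x))"
      by simp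
    then show "((\<lambda>x. P (of_real x + \<i> * of_real y)) has_vector_derivative
                 G (of_real x + \<i> * of_real y)) (at x within {a..b})"
      by (rule has_vector_derivative_real_field)
  qed
  then show ?thesis
    using set_borel_integral_eq_integral(2)[OF set_intg] by (simp add: integral_unique)
qed

lemma vertical_segment_bound:
  fixes P G :: "complex \<Rightarrow> complex"
  assumes prim: "\<And>z. \<bar>Im z\<bar> \<le> \<bar>y\<bar> \<Longrightarrow> (P has_field_derivative G z) (at z)"
    and bound: "\<And>z. Re z = a \<Longrightarrow> \<bar>Im z\<bar> \<le> \<bar>y\<bar> \<Longrightarrow> norm (G z) \<le> M"
  shows "norm (P (of_real a) - P (of_real a + \<i> * of_real y)) \<le> M * \<bar>y\<bar>"
proof -
  define V where "V = {z::complex. Re z = a \<and> \<bar>Im z\<bar> \<le> \<bar>y\<bar>}"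
  have "V = {z. Re z \<le> a} \<inter> {z. a \<le> Re z} \<inter> ({z. Im z \<le> \<bar>y\<bar>} \<inter> {z. - \<bar>y\<bar> \<le> Im z})"
    by (auto simp: V_def)
  then have "convex V"
    by (simp add: convex_Int convex_halfspace_Im_le convex_halfspace_Im_ge
        convex_halfspace_Re_le convex_halfspace_Re_ge)
  then have "norm (P (of_real a + \<i> * of_real y) - P (of_real a))
      \<le> M * norm ((of_real a + \<i> * of_real y) - of_real a)"
    by (rule field_differentiable_bound)
       (use prim bound in \<open>auto simp: V_def intro: has_field_derivative_at_within\<close>)
  then show ?thesis
    by (simp add: norm_mult norm_minus_commute)
qed

text \<open>Then G has the same integral over \<real> and over
  \<real> + i y: the integrals over [-n, n] and [-n, n] + i y differ by the increments of P along the
  two vertical sides, which are O(1/(1 + n^2)).\<close>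
lemma line_integral_shift_primitive:
  fixes G P :: "complex \<Rightarrow> complex"
  assumes prim: "\<And>z. \<bar>Im z\<bar> \<le> \<bar>y\<bar> \<Longrightarrow> (P has_field_derivative G z) (at z)"
    and cont: "continuous_on {z. \<bar>Im z\<bar> \<le> \<bar>y\<bar>} G"
    and bound: "\<And>z. \<bar>Im z\<bar> \<le> \<bar>y\<bar> \<Longrightarrow> norm (G z) \<le> B / (1 + (Re z)^2)"
  shows "integrable lborel (\<lambda>x. G (of_real x))"
    and "integrable lborel (\<lambda>x. G (of_real x + \<i> * of_real y))"
    and "(LINT x|lborel. G (of_real x)) = (LINT x|lborel. G (of_real x + \<i> * of_real y))"
proof -
  have intg: "integrable lborel (\<lambda>x. G (of_real x + \<i> * of_real y'))" if "\<bar>y'\<bar> \<le> \<bar>y\<bar>" for y'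
    using bound[of "of_real _ + \<i> * of_real y'"] that
    by (intro integrable_horizontal_line[OF cont, where B = B]) simp_all
  show "integrable lborel (\<lambda>x. G (of_real x))"
    using intg[of 0] by simp
  show "integrable lborel (\<lambda>x. G (of_real x + \<i> * of_real y))"
    using intg[of y] by simp
  have segment: "(LINT x:{-real n..real n}|lborel. G (of_real x + \<i> * of_real y'))
      = P (of_real (real n) + \<i> * of_real y') - P (- of_real (real n) + \<i> * of_real y')"
    if "\<bar>y'\<bar> \<le> \<bar>y\<bar>" for y' n
    using horizontal_segment_integral_primitive[OF prim intg[OF that]] that by simp
  have side: "norm (P (of_real a) - P (of_real a + \<i> * of_real y)) \<le> B / (1 + a^2) * \<bar>y\<bar>" for a
    using bound by (intro vertical_segment_bound[OF prim]) auto
  define d where "d = (\<lambda>n::nat. (LINT x:{-real n..real n}|lborel. G (of_real x + \<i> * of_real 0))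
      - (LINT x:{-real n..real n}|lborel. G (of_real x + \<i> * of_real y)))"
  have "d \<longlonglongrightarrow> (LINT x|lborel. G (of_real x + \<i> * of_real 0))
                 - (LINT x|lborel. G (of_real x + \<i> * of_real y))"
    unfolding d_def using intg[of 0] intg[of y]
    by (intro tendsto_diff tendsto_integral_symmetric_truncation) simp_all
  moreover have "d \<longlonglongrightarrow> 0"
  proof (rule Lim_null_comparison)
    have "norm (d n) \<le> 2 * \<bar>y\<bar> * B / (1 + real n ^ 2)" for n
    proof -
      have "d n = (P (of_real (real n)) - P (of_real (real n) + \<i> * of_real y))
                - (P (of_real (- real n)) - P (of_real (- real n) + \<i> * of_real y))"
        unfolding d_def using segment[of 0 n] segment[of y n] by simp
      also have "norm \<dots> \<le> norm (P (of_real (real n)) - P (of_real (real n) + \<i> * of_real y))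
          + norm (P (of_real (- real n)) - P (of_real (- real n) + \<i> * of_real y))"
        by (rule norm_triangle_ineq4)
      also have "\<dots> \<le> B / (1 + (real n)^2) * \<bar>y\<bar> + B / (1 + (- real n)^2) * \<bar>y\<bar>"
        by (intro add_mono side)
      finally show ?thesis
        by (simp add: field_simps)
    qed
    then show "\<forall>\<^sub>F n in sequentially. norm (d n) \<le> 2 * \<bar>y\<bar> * B / (1 + real n ^ 2)"
      by simp
    show "(\<lambda>n. 2 * \<bar>y\<bar> * B / (1 + real n ^ 2)) \<longlonglongrightarrow> 0"
      by real_asymp
  qed
  ultimately show "(LINT x|lborel. G (of_real x)) = (LINT x|lborel. G (of_real x + \<i> * of_real y))"
    using LIMSEQ_unique by fastforce
qed

text \<open>Contour shift inside a strip: a function holomorphic in |Im z| < c has a primitive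
  there (the strip is convex), so the previous lemma applies to any line \<real> + i y, |y| < c.\<close>
lemma line_integral_shift:
  fixes G :: "complex \<Rightarrow> complex"
  assumes holo: "G holomorphic_on {z. \<bar>Im z\<bar> < c}" and y: "\<bar>y\<bar> < c"
    and bound: "\<And>z. \<bar>Im z\<bar> \<le> \<bar>y\<bar> \<Longrightarrow> norm (G z) \<le> B / (1 + (Re z)^2)"
  shows "integrable lborel (\<lambda>x. G (of_real x))"
    and "integrable lborel (\<lambda>x. G (of_real x + \<i> * of_real y))"
    and "(LINT x|lborel. G (of_real x)) = (LINT x|lborel. G (of_real x + \<i> * of_real y))"
proof -
  define S where "S = {z::complex. \<bar>Im z\<bar> < c}"
  have "S = {z. Im z < c} \<inter> {z. - c < Im z}"
    by (auto simp: S_def)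
  then have "convex S"
    by (simp add: convex_Int convex_halfspace_Im_lt convex_halfspace_Im_gt)
  moreover have "open S"
    unfolding S_def by (intro open_Collect_less continuous_intros)
  ultimately obtain P where P: "\<And>z. z \<in> S \<Longrightarrow> (P has_field_derivative G z) (at z within S)"
    using holomorphic_convex_primitive' holo S_def by blast
  have closed_strip: "{z. \<bar>Im z\<bar> \<le> \<bar>y\<bar>} \<subseteq> S"
    using y by (auto simp: S_def)
  have "(P has_field_derivative G z) (at z)" if "\<bar>Im z\<bar> \<le> \<bar>y\<bar>" for z
    using P at_within_open[OF _ \<open>open S\<close>] closed_strip that by fastforce
  moreover have "continuous_on {z. \<bar>Im z\<bar> \<le> \<bar>y\<bar>} G"
    using holomorphic_on_imp_continuous_on[OF holo] closed_strip
    by (auto simp: S_def intro: continuous_on_subset)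
  ultimately show "integrable lborel (\<lambda>x. G (of_real x))"
    and "integrable lborel (\<lambda>x. G (of_real x + \<i> * of_real y))"
    and "(LINT x|lborel. G (of_real x)) = (LINT x|lborel. G (of_real x + \<i> * of_real y))"
    using line_integral_shift_primitive[OF _ _ bound] by blast+
qed

section \<open>The function tanh(\<pi> z) in the strip |Im z| < 1/2\<close>

definition tanh_pi :: "complex \<Rightarrow> complex" where
  "tanh_pi z = (exp (of_real pi * z) - exp (- (of_real pi * z)))
               / (exp (of_real pi * z) + exp (- (of_real pi * z)))"

lemma tanh_pi_of_real: "tanh_pi (of_real x) = of_real (tanh (pi * x))"
proof -
  have "tanh (pi * x) = (exp (pi * x) - exp (- (pi * x))) / (exp (pi * x) + exp (- (pi * x)))"
    by (simp add: tanh_def sinh_def cosh_def divide_simps) (simp add: algebra_simps)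
  then show ?thesis
    by (simp add: tanh_pi_def exp_of_real[symmetric])
qed

lemma tanh_pi_norm_squares:
  fixes z :: complex
  defines "N \<equiv> exp (of_real pi * z) - exp (- (of_real pi * z))"
    and "D \<equiv> exp (of_real pi * z) + exp (- (of_real pi * z))"
  shows "(norm N)^2 = (exp (pi * Re z) - exp (- (pi * Re z)))^2 + 4 * (sin (pi * Im z))^2"
    and "(norm D)^2 = (exp (pi * Re z) - exp (- (pi * Re z)))^2 + 4 * (cos (pi * Im z))^2"
proof -
  define E where "E = exp (pi * Re z)"
  define E' where "E' = exp (- (pi * Re z))"
  define c where "c = cos (pi * Im z)"
  define s where "s = sin (pi * Im z)"
  have EE: "E * E' = 1"
    by (simp add: E_def E'_def exp_minus field_simps)
  have cs: "s^2 + c^2 = 1"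
    by (simp add: s_def c_def)
  have "(norm N)^2 = ((E - E') * c)^2 + ((E + E') * s)^2"
    by (simp add: cmod_power2 N_def E_def E'_def c_def s_def Re_exp Im_exp algebra_simps)
  also have "\<dots> = (E - E')^2 * (s^2 + c^2) + 4 * (E * E') * s^2"
    by (simp add: power2_eq_square algebra_simps)
  finally show "(norm N)^2 = (exp (pi * Re z) - exp (- (pi * Re z)))^2 + 4 * (sin (pi * Im z))^2"
    using cs EE by (simp add: E_def E'_def s_def)
  have "(norm D)^2 = ((E + E') * c)^2 + ((E - E') * s)^2"
    by (simp add: cmod_power2 D_def E_def E'_def c_def s_def Re_exp Im_exp algebra_simps)
  also have "\<dots> = (E - E')^2 * (s^2 + c^2) + 4 * (E * E') * c^2"
    by (simp add: power2_eq_square algebra_simps)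
  finally show "(norm D)^2 = (exp (pi * Re z) - exp (- (pi * Re z)))^2 + 4 * (cos (pi * Im z))^2"
    using cs EE by (simp add: E_def E'_def c_def)
qed

lemma cos_pi_pos:
  assumes "\<bar>u\<bar> < 1/2"
  shows "cos (pi * u) > 0"
proof (rule cos_gt_zero_pi)
  have u: "- 1/2 < u" "u < 1/2"
    using assms by auto
  have "pi * (- 1/2) < pi * u"
    by (rule mult_strict_left_mono) (use u in auto)
  moreover have "pi * u < pi * (1/2)"
    by (rule mult_strict_left_mono) (use u in auto)
  ultimately show "- (pi / 2) < pi * u" "pi * u < pi / 2"
    by auto
qed

lemma tanh_pi_denominator_nonzero:
  assumes "\<bar>Im z\<bar> < 1/2"
  shows "exp (of_real pi * z) + exp (- (of_real pi * z)) \<noteq> 0"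
proof
  assume "exp (of_real pi * z) + exp (- (of_real pi * z)) = 0"
  then have "(exp (pi * Re z) - exp (- (pi * Re z)))^2 + 4 * (cos (pi * Im z))^2 = 0"
    using tanh_pi_norm_squares(2)[of z] by simp
  moreover have "cos (pi * Im z) > 0"
    using cos_pi_pos assms by blast
  ultimately show False
    by (metis add_nonneg_pos mult_pos_pos zero_less_numeral zero_less_power zero_le_power2
        less_irrefl)
qed

lemma holomorphic_tanh_pi: "tanh_pi holomorphic_on {z. \<bar>Im z\<bar> < 1/2}"
  unfolding tanh_pi_def by (intro holomorphic_intros) (use tanh_pi_denominator_nonzero in simp)

text \<open>On the closed strip |Im z| \<le> y0 < 1/2, |tanh(\<pi> z)| \<le> 1/cos(\<pi> y0): multiplied by
  cos^2(\<pi> y0), the square of the numerator is dominated by the square of the denominator.\<close>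
lemma norm_tanh_pi_le:
  assumes z: "\<bar>Im z\<bar> \<le> y0" and y0: "y0 < 1/2"
  shows "norm (tanh_pi z) \<le> 1 / cos (pi * y0)"
proof -
  define m where "m = (exp (pi * Re z) - exp (- (pi * Re z)))^2"
  define cz where "cz = cos (pi * Im z)"
  define sz where "sz = sin (pi * Im z)"
  define c where "c = cos (pi * y0)"
  have c_pos: "c > 0"
    unfolding c_def using cos_pi_pos[of y0] z y0 by simp
  have "cos (pi * y0) \<le> cos (pi * \<bar>Im z\<bar>)"
    by (rule cos_monotone_0_pi_le) (use z y0 in auto)
  moreover have "cos (pi * \<bar>Im z\<bar>) = cos (pi * Im z)"
    by (cases "Im z \<ge> 0") auto
  ultimately have c_le: "c \<le> cz"
    by (simp add: c_def cz_def)
  have c_sq: "c^2 \<le> cz^2" "cz^2 \<le> 1" "sz^2 \<le> 1"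
    using c_pos c_le by (simp_all add: power_mono cz_def sz_def abs_square_le_1)
  have m_nonneg: "m \<ge> 0"
    by (simp add: m_def)
  have key: "(m + 4 * sz^2) * c^2 \<le> m + 4 * cz^2"
  proof -
    have "m * c^2 \<le> m"
      using mult_left_mono[of "c^2" 1 m] c_sq m_nonneg by simp
    moreover have "sz^2 * c^2 \<le> cz^2"
      using mult_right_mono[of "sz^2" 1 "c^2"] c_sq by simp
    ultimately show ?thesis
      by (simp add: distrib_right)
  qed
  have "0 < (norm (exp (of_real pi * z) + exp (- (of_real pi * z))))^2"
    using tanh_pi_denominator_nonzero[of z] z y0 by simp
  then have D_pos: "m + 4 * cz^2 > 0"
    unfolding tanh_pi_norm_squares m_def cz_def .
  have "(norm (tanh_pi z) * c)^2
      = (norm (exp (of_real pi * z) - exp (- (of_real pi * z))))^2 * c^2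
        / (norm (exp (of_real pi * z) + exp (- (of_real pi * z))))^2"
    by (simp add: tanh_pi_def norm_divide power_divide power_mult_distrib)
  also have "\<dots> \<le> 1"
    unfolding tanh_pi_norm_squares using key D_pos
    by (simp add: m_def cz_def sz_def pos_divide_le_eq)
  finally have "norm (tanh_pi z) * c \<le> 1"
    using c_pos by (simp add: abs_square_le_1 power2_le_iff_abs_le)
  then show ?thesis
    using c_pos by (simp add: c_def field_simps)
qed

section \<open>The integral along a shifted line\<close>

lemma shifted_cauchy_density_le:
  fixes x s :: real
  shows "1 / (1 + (x + s)^2) \<le> 2 * (1 + \<bar>s\<bar>)^2 / (1 + x^2)"
proof -
  have "x^2 \<le> 2 * (x + s)^2 + 2 * s^2"
    using zero_le_power2[of "x + 2 * s"] by (simp add: power2_eq_square algebra_simps)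
  moreover have "1 + 2 * s^2 \<le> 2 * (1 + \<bar>s\<bar>)^2" "1 \<le> (1 + \<bar>s\<bar>)^2"
    by (simp_all add: power2_eq_square algebra_simps)
  moreover have "(x + s)^2 \<le> (1 + \<bar>s\<bar>)^2 * (x + s)^2"
    using mult_right_mono[of 1 "(1 + \<bar>s\<bar>)^2" "(x + s)^2"] \<open>1 \<le> (1 + \<bar>s\<bar>)^2\<close> by simp
  ultimately have "1 + x^2 \<le> 2 * (1 + \<bar>s\<bar>)^2 * (1 + (x + s)^2)"
    by (simp add: algebra_simps)
  then show ?thesis
    by (simp add: divide_simps add_pos_nonneg)
qed

text \<open>Pointwise bound for the integrand z tanh(\<pi> z) F(z + s) e^{i\<alpha>z} in the strip
  |Im z| \<le> y0 < 1/2, when F decays like (1 + |Re z|)^-3 for |Im z| \<le> 1: the cubic decay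
  absorbs the linear growth of z and leaves a quadratic decay centred at -s.\<close>
lemma norm_tanh_integrand_le:
  fixes F :: "complex \<Rightarrow> complex"
  assumes F: "\<And>z. \<bar>Im z\<bar> \<le> 1 \<Longrightarrow> norm (F z) \<le> C3 / (1 + \<bar>Re z\<bar>)^3"
    and y0: "y0 < 1/2" and z: "\<bar>Im z\<bar> \<le> y0"
  shows "norm (z * tanh_pi z * F (z + of_real s) * exp (\<i> * of_real \<alpha> * z))
     \<le> C3 / cos (pi * y0) * exp (- \<alpha> * Im z) * (1 + \<bar>s\<bar>) / (1 + (Re z + s)^2)"
proof -
  define u where "u = \<bar>Re z + s\<bar>"
  define c where "c = cos (pi * y0)"
  have u_nonneg: "u \<ge> 0"
    by (simp add: u_def)
  have c_pos: "c > 0"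
    unfolding c_def using cos_pi_pos[of y0] z y0 by simp
  have C3_nonneg: "C3 \<ge> 0"
    using order_trans[OF norm_ge_zero F[of 0]] by simp
  have norm_z: "norm z \<le> (1 + u) * (1 + \<bar>s\<bar>)"
  proof -
    have "norm z \<le> \<bar>Re z\<bar> + \<bar>Im z\<bar>"
      by (rule cmod_le)
    also have "\<dots> \<le> u + \<bar>s\<bar> + 1"
      using z y0 unfolding u_def by linarith
    also have "\<dots> \<le> (1 + u) * (1 + \<bar>s\<bar>)"
      using u_nonneg by (simp add: algebra_simps)
    finally show ?thesis .
  qed
  have norm_F: "norm (F (z + of_real s)) \<le> C3 / (1 + u)^3"
    using F[of "z + of_real s"] z y0 by (simp add: u_def)
  have "norm (z * tanh_pi z * F (z + of_real s) * exp (\<i> * of_real \<alpha> * z))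
      = norm z * norm (tanh_pi z) * norm (F (z + of_real s)) * exp (- \<alpha> * Im z)"
    by (simp add: norm_mult norm_exp_eq_Re)
  also have "\<dots> \<le> ((1 + u) * (1 + \<bar>s\<bar>)) * (1 / c) * (C3 / (1 + u)^3) * exp (- \<alpha> * Im z)"
    using norm_tanh_pi_le[OF z y0] norm_z norm_F u_nonneg c_pos
    by (intro mult_right_mono mult_mono) (auto simp: c_def)
  also have "\<dots> = C3 / c * exp (- \<alpha> * Im z) * (1 + \<bar>s\<bar>) / (1 + u)^2"
  proof -
    have "P * S * (1 / c) * (C3 / P^3) * E = C3 / c * E * S / P^2" if "P > 0" for P S E :: real
      using that c_pos by (simp add: field_simps power3_eq_cube power2_eq_square)
    then show ?thesis
      using u_nonneg by simp
  qed
  also have "\<dots> \<le> C3 / c * exp (- \<alpha> * Im z) * (1 + \<bar>s\<bar>) / (1 + (Re z + s)^2)"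
  proof (rule divide_left_mono)
    have "(Re z + s)^2 = u^2"
      by (simp add: u_def)
    then show "1 + (Re z + s)^2 \<le> (1 + u)^2"
      using u_nonneg by (simp add: power2_eq_square algebra_simps)
    show "0 \<le> C3 / c * exp (- \<alpha> * Im z) * (1 + \<bar>s\<bar>)"
      using c_pos C3_nonneg by simp
    show "0 < (1 + u)^2 * (1 + (Re z + s)^2)"
      using u_nonneg by (simp add: add_pos_nonneg)
  qed
  finally show ?thesis
    by (simp add: c_def)
qed

text \<open>Uniform decay of the integrand on the closed strip |Im z| \<le> y0, centred at 0 rather
  than at -s (as needed for the contour shift): the exponential factor is at most e^{|\<alpha>| y0}.\<close>
lemma tanh_integrand_strip_bound:
  fixes F :: "complex \<Rightarrow> complex"
  assumes F: "\<And>z. \<bar>Im z\<bar> \<le> 1 \<Longrightarrow> norm (F z) \<le> C3 / (1 + \<bar>Re z\<bar>)^3"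
    and y0: "y0 < 1/2" and z: "\<bar>Im z\<bar> \<le> y0"
  shows "norm (z * tanh_pi z * F (z + of_real s) * exp (\<i> * of_real \<alpha> * z))
     \<le> C3 / cos (pi * y0) * exp (\<bar>\<alpha>\<bar> * y0) * (1 + \<bar>s\<bar>) * (2 * (1 + \<bar>s\<bar>)^2) / (1 + (Re z)^2)"
proof -
  define K0 where "K0 = C3 / cos (pi * y0) * exp (\<bar>\<alpha>\<bar> * y0) * (1 + \<bar>s\<bar>)"
  have K0_nonneg: "K0 \<ge> 0"
    using order_trans[OF norm_ge_zero F[of 0]] cos_pi_pos[of y0] z y0 by (simp add: K0_def)
  have "- \<alpha> * Im z \<le> \<bar>\<alpha>\<bar> * \<bar>Im z\<bar>"
    by (simp add: abs_mult[symmetric])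
  also have "\<dots> \<le> \<bar>\<alpha>\<bar> * y0"
    using z by (simp add: mult_left_mono)
  finally have exp_le: "exp (- \<alpha> * Im z) \<le> exp (\<bar>\<alpha>\<bar> * y0)"
    by simp
  have "norm (z * tanh_pi z * F (z + of_real s) * exp (\<i> * of_real \<alpha> * z))
      \<le> C3 / cos (pi * y0) * exp (- \<alpha> * Im z) * (1 + \<bar>s\<bar>) / (1 + (Re z + s)^2)"
    by (rule norm_tanh_integrand_le[OF F y0 z])
  also have "\<dots> \<le> K0 * (1 / (1 + (Re z + s)^2))"
    unfolding K0_def using exp_le K0_nonneg order_trans[OF norm_ge_zero F[of 0]] cos_pi_pos[of y0] z y0
    by (simp add: divide_right_mono mult_left_mono mult_right_mono)
  also have "\<dots> \<le> K0 * (2 * (1 + \<bar>s\<bar>)^2 / (1 + (Re z)^2))"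
    using K0_nonneg by (intro mult_left_mono shifted_cauchy_density_le)
  finally show ?thesis
    by (simp add: K0_def)
qed

text \<open>For F entire with cubic decay in |Im z| \<le> 1 and 0 < y0 < 1/2,
  the integral of x tanh(\<pi> x) F(x + s) e^{i\<alpha>x} over \<real> is O((1 + |s|) e^{-|\<alpha>| y0}):
  shift the line of integration to Im z = y0 sgn \<alpha>, where |e^{i\<alpha>z}| = e^{-|\<alpha>| y0}, and
  integrate the pointwise bound against the Cauchy density.\<close>
lemma tanh_integral_shift_bound:
  fixes F :: "complex \<Rightarrow> complex" and s \<alpha> :: real
  assumes holo_F: "F holomorphic_on UNIV"
    and F: "\<And>z. \<bar>Im z\<bar> \<le> 1 \<Longrightarrow> norm (F z) \<le> C3 / (1 + \<bar>Re z\<bar>)^3"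
    and y0: "0 < y0" "y0 < 1/2"
  defines "g \<equiv> \<lambda>x::real. of_real x * tanh_pi (of_real x) * F (of_real x + of_real s)
                            * exp (\<i> * of_real \<alpha> * of_real x)"
  shows "integrable lborel g"
    and "norm (LINT x|lborel. g x) \<le> C3 / cos (pi * y0) * exp (- \<bar>\<alpha>\<bar> * y0) * (1 + \<bar>s\<bar>) * pi"
proof -
  define y where "y = (if \<alpha> \<ge> 0 then y0 else - y0)"
  have y: "\<bar>y\<bar> = y0" "\<alpha> * y = \<bar>\<alpha>\<bar> * y0" "\<bar>y\<bar> < 1/2"
    using y0 by (auto simp: y_def)
  define G where "G = (\<lambda>z. z * tanh_pi z * F (z + of_real s) * exp (\<i> * of_real \<alpha> * z))"
  have holo_G: "G holomorphic_on {z. \<bar>Im z\<bar> < 1/2}"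
    unfolding G_def
    by (intro holomorphic_intros holomorphic_tanh_pi
        holomorphic_on_compose[OF _ holomorphic_on_subset[OF holo_F], unfolded o_def]) auto
  have strip_bound: "norm (G z) \<le> C3 / cos (pi * y0) * exp (\<bar>\<alpha>\<bar> * y0) * (1 + \<bar>s\<bar>)
      * (2 * (1 + \<bar>s\<bar>)^2) / (1 + (Re z)^2)" if "\<bar>Im z\<bar> \<le> \<bar>y\<bar>" for z
    unfolding G_def using tanh_integrand_strip_bound[OF F y0(2)] that y by simp
  note shift = line_integral_shift[OF holo_G y(3) strip_bound]
  have g_eq: "g = (\<lambda>x. G (of_real x))"
    by (simp add: g_def G_def)
  show "integrable lborel g"
    unfolding g_eq using shift(1) y by simp
  define K where "K = C3 / cos (pi * y0) * exp (- \<bar>\<alpha>\<bar> * y0) * (1 + \<bar>s\<bar>)"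
  have line_bound: "norm (G (of_real x + \<i> * of_real y)) \<le> K * (1 / (1 + (x + s)^2))" for x
  proof -
    have "\<bar>Im (of_real x + \<i> * of_real y)\<bar> \<le> y0"
      using y by simp
    from norm_tanh_integrand_le[OF F y0(2) this, of s \<alpha>]
    show ?thesis
      using y by (simp add: G_def K_def)
  qed
  have "norm (LINT x|lborel. g x) = norm (LINT x|lborel. G (of_real x + \<i> * of_real y))"
    unfolding g_eq using shift(3) y by simp
  also have "\<dots> \<le> (LINT x|lborel. norm (G (of_real x + \<i> * of_real y)))"
    by (rule integral_norm_bound)
  also have "\<dots> \<le> (LINT x|lborel. K * (1 / (1 + (x + s)^2)))"
    using shift(2) y line_bound integrable_mult_right[OF cauchy_density_shift(1), of K s]
    by (intro integral_mono) auto
  also have "\<dots> = K * pi"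
    using cauchy_density_shift(2)[of s] by (simp only: integral_mult_right_zero)
  finally show "norm (LINT x|lborel. g x) \<le> C3 / cos (pi * y0) * exp (- \<bar>\<alpha>\<bar> * y0) * (1 + \<bar>s\<bar>) * pi"
    by (simp add: K_def)
qed

lemma tanh_integrand_split:
  fixes F :: "complex \<Rightarrow> complex" and k :: "real \<Rightarrow> complex"
  assumes F_k: "\<And>x. F (of_real x) = k x"
  shows "of_real (r * tanh (pi * r)) * K_alpha k \<alpha> (r + s)
    = exp (\<i> * of_real (\<alpha> * s))
        * (of_real r * tanh_pi (of_real r) * F (of_real r + of_real s) * exp (\<i> * of_real \<alpha> * of_real r))
      + exp (\<i> * of_real (- \<alpha> * s))
        * (of_real r * tanh_pi (of_real r) * F (of_real r + of_real s) * exp (\<i> * of_real (- \<alpha>) * of_real r))"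
proof -
  have "exp (\<i> * of_real (\<alpha> * (r + s))) = exp (\<i> * of_real (\<alpha> * s)) * exp (\<i> * of_real \<alpha> * of_real r)"
       "exp (- \<i> * of_real (\<alpha> * (r + s))) = exp (\<i> * of_real (- \<alpha> * s)) * exp (\<i> * of_real (- \<alpha>) * of_real r)"
    by (simp_all add: exp_add[symmetric] algebra_simps)
  then show ?thesis
    unfolding K_alpha_def by (simp add: tanh_pi_of_real F_k[symmetric] algebra_simps)
qed

text \<open>Writing
  K_\<alpha>(r + s) = k(r + s)(e^{i\<alpha>s} e^{i\<alpha>r} + e^{-i\<alpha>s} e^{-i\<alpha>r}), the integral splits into
  two integrals of the form bounded in tanh_integral_shift_bound, with frequencies \<plusminus>\<alpha>.\<close>
lemma tanh_int_bound:
  fixes k :: "real \<Rightarrow> complex"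
  assumes entire: "entire_rapid_decr_strips k" and y0: "0 < y0" "y0 < 1/2"
  shows "\<exists>A\<ge>0. \<forall>\<alpha> s. norm (tanh_int k \<alpha> s) \<le> A * (1 + \<bar>s\<bar>) * exp (- \<bar>\<alpha>\<bar> * y0)"
proof -
  obtain F where holo_F: "F holomorphic_on UNIV" and F_k: "\<And>x. F (of_real x) = k x"
    and decay: "\<And>(a::real) (N::nat). \<exists>C. \<forall>z. \<bar>Im z\<bar> \<le> a \<longrightarrow> norm (F z) \<le> C / (1 + \<bar>Re z\<bar>) ^ N"
    using entire unfolding entire_rapid_decr_strips_def by blast
  obtain C3 where F: "\<And>z. \<bar>Im z\<bar> \<le> 1 \<Longrightarrow> norm (F z) \<le> C3 / (1 + \<bar>Re z\<bar>) ^ 3"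
    using decay[of 1 3] by blast
  define A0 where "A0 = C3 / cos (pi * y0)"
  have "A0 \<ge> 0"
    using order_trans[OF norm_ge_zero F[of 0]] cos_pi_pos[of y0] y0 by (simp add: A0_def)
  moreover have "norm (tanh_int k \<alpha> s) \<le> (2 * A0 * pi) * (1 + \<bar>s\<bar>) * exp (- \<bar>\<alpha>\<bar> * y0)"
    for \<alpha> s
  proof -
    define g where "g = (\<lambda>a x. of_real x * tanh_pi (of_real x) * F (of_real x + of_real s)
                               * exp (\<i> * of_real a * of_real x))"
    have integrable: "integrable lborel (g a)" for a
      unfolding g_def by (rule tanh_integral_shift_bound(1)[OF holo_F F y0])
    have bound: "norm (LINT x|lborel. g a x) \<le> A0 * exp (- \<bar>a\<bar> * y0) * (1 + \<bar>s\<bar>) * pi" for a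
      unfolding g_def A0_def by (rule tanh_integral_shift_bound(2)[OF holo_F F y0])
    define e1 where "e1 = exp (\<i> * of_real (\<alpha> * s))"
    define e2 where "e2 = exp (\<i> * of_real (- \<alpha> * s))"
    have norm_e: "norm e1 = 1" "norm e2 = 1"
      unfolding e1_def e2_def by (rule norm_exp_i_times)+
    have split: "of_real (r * tanh (pi * r)) * K_alpha k \<alpha> (r + s) = e1 * g \<alpha> r + e2 * g (- \<alpha>) r"
      for r
      unfolding e1_def e2_def g_def by (rule tanh_integrand_split[where F = F and k = k, OF F_k])
    have "tanh_int k \<alpha> s = e1 * (LINT r|lborel. g \<alpha> r) + e2 * (LINT r|lborel. g (- \<alpha>) r)"
      unfolding tanh_int_def split using integrable by simp
    also have "norm \<dots> \<le> norm (LINT r|lborel. g \<alpha> r) + norm (LINT r|lborel. g (- \<alpha>) r)"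
      using norm_triangle_ineq[of "e1 * (LINT r|lborel. g \<alpha> r)" "e2 * (LINT r|lborel. g (- \<alpha>) r)"]
      by (simp add: norm_mult norm_e)
    also have "\<dots> \<le> A0 * exp (- \<bar>\<alpha>\<bar> * y0) * (1 + \<bar>s\<bar>) * pi
                  + A0 * exp (- \<bar>- \<alpha>\<bar> * y0) * (1 + \<bar>s\<bar>) * pi"
      by (intro add_mono bound)
    finally show ?thesis
      by (simp add: algebra_simps)
  qed
  ultimately show ?thesis
    by (intro exI[of _ "2 * A0 * pi"]) simp
qed

lemma tanh_int_pair_bound:
  fixes k :: "real \<Rightarrow> complex"
  assumes entire: "entire_rapid_decr_strips k" and \<epsilon>: "\<epsilon> > 0"
  shows "\<exists>C\<ge>0. \<forall>\<alpha> t. t \<ge> 1 \<longrightarrow>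
           norm (tanh_int k \<alpha> (- t)) + norm (tanh_int k \<alpha> t) \<le> C * t * exp (- \<bar>\<alpha>\<bar> * (1/2 - \<epsilon>))"
proof -
  define y0 where "y0 = max (1/2 - \<epsilon>) (1/4)"
  have y0: "0 < y0" "y0 < 1/2" "1/2 - \<epsilon> \<le> y0"
    unfolding y0_def max_def using \<epsilon> by auto
  obtain A where A: "A \<ge> 0" "\<And>\<alpha> s. norm (tanh_int k \<alpha> s) \<le> A * (1 + \<bar>s\<bar>) * exp (- \<bar>\<alpha>\<bar> * y0)"
    using tanh_int_bound[OF entire y0(1,2)] by blast
  have "norm (tanh_int k \<alpha> (- t)) + norm (tanh_int k \<alpha> t) \<le> (4 * A) * t * exp (- \<bar>\<alpha>\<bar> * (1/2 - \<epsilon>))"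
    if t: "t \<ge> 1" for \<alpha> t
  proof -
    have exp_le: "exp (- \<bar>\<alpha>\<bar> * y0) \<le> exp (- \<bar>\<alpha>\<bar> * (1/2 - \<epsilon>))"
      using y0(3) by (simp add: mult_left_mono)
    have "norm (tanh_int k \<alpha> (- t)) + norm (tanh_int k \<alpha> t) \<le> 2 * (A * (1 + t) * exp (- \<bar>\<alpha>\<bar> * y0))"
      using A(2)[of \<alpha> "- t"] A(2)[of \<alpha> t] t by simp
    also have "\<dots> \<le> 2 * (A * (2 * t) * exp (- \<bar>\<alpha>\<bar> * (1/2 - \<epsilon>)))"
      using A(1) t exp_le by (intro mult_left_mono mult_mono) auto
    finally show ?thesis
      by simp
  qed
  then show ?thesis
    using A(1) by (intro exI[of _ "4 * A"]) auto
qed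

lemma log_scale_exp_bound:
  fixes \<beta> g C0 c2 T t :: real
  assumes "\<beta> > 0" "g > 0" "T > 0" "t > 0" "t \<le> c2 * T"
  shows "t * exp (- \<bar>2 * \<beta> * ln T - C0\<bar> * g) \<le> exp (C0 * g) * c2 powr (2 * \<beta> * g) * t powr (1 - 2 * \<beta> * g)"
proof -
  have c2: "c2 > 0"
    using assms by (meson less_le_trans zero_less_mult_pos2)
  have "(2 * \<beta> * ln T - C0) * g \<le> \<bar>2 * \<beta> * ln T - C0\<bar> * g"
    using assms by (intro mult_right_mono) auto
  then have "exp (- \<bar>2 * \<beta> * ln T - C0\<bar> * g) \<le> exp (- (2 * \<beta> * ln T - C0) * g)"
    by (simp only: exp_le_cancel_iff mult_minus_left neg_le_iff_le)
  also have "\<dots> = exp (C0 * g) * T powr (- (2 * \<beta> * g))"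
    using assms by (simp add: powr_def exp_add[symmetric] algebra_simps)
  also have "T powr (- (2 * \<beta> * g)) \<le> (t / c2) powr (- (2 * \<beta> * g))"
    using assms c2 by (intro powr_mono2') (auto simp: divide_le_eq mult.commute)
  also have "(t / c2) powr (- (2 * \<beta> * g)) = t powr (- (2 * \<beta> * g)) / c2 powr (- (2 * \<beta> * g))"
    using assms c2 by (simp add: powr_divide)
  also have "\<dots> = t powr (- (2 * \<beta> * g)) * c2 powr (2 * \<beta> * g)"
    by (simp add: powr_minus divide_inverse)
  finally have "t * exp (- \<bar>2 * \<beta> * ln T - C0\<bar> * g)
      \<le> exp (C0 * g) * c2 powr (2 * \<beta> * g) * (t * t powr (- (2 * \<beta> * g)))"
    using assms by (simp add: mult_left_mono algebra_simps)
  also have "t * t powr (- (2 * \<beta> * g)) = t powr (1 - 2 * \<beta> * g)"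
    using assms by (simp add: powr_diff powr_minus divide_inverse)
  finally show ?thesis .
qed

theorem mainTheorem12:
  fixes k :: "real \<Rightarrow> complex"
  assumes entire: "entire_rapid_decr_strips k"
    and even: "\<And>r. k (- r) = k r"
    and ft_nonneg: "\<And>u. Im (fourier_tr k u) = 0 \<and> Re (fourier_tr k u) \<ge> 0"
    and ft_supp: "\<And>u. \<bar>u\<bar> > 1 \<Longrightarrow> fourier_tr k u = 0"
  shows "(\<forall>\<epsilon>>0. \<exists>C. \<forall>\<alpha> t. t \<ge> 1 \<longrightarrow>
            norm (tanh_int k \<alpha> (- t)) + norm (tanh_int k \<alpha> t)
              \<le> C * t * exp (- \<bar>\<alpha>\<bar> * (1/2 - \<epsilon>)))
       \<and> (\<forall>\<epsilon>>0. \<forall>\<beta> C0 c1 c2. 0 < \<beta> \<and> \<beta> \<le> 1 \<and> 0 < c1 \<and> c1 \<le> c2 \<longrightarrow>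
            (\<exists>M. \<forall>T t. T > 0 \<and> t \<ge> 1 \<and> c1 * T \<le> t \<and> t \<le> c2 * T \<longrightarrow>
               norm (tanh_int k (2 * \<beta> * ln T - C0) (- t))
                 + norm (tanh_int k (2 * \<beta> * ln T - C0) t)
               \<le> M * t powr (1 + \<epsilon> - \<beta>)))"
proof (intro conjI allI impI)
  fix \<epsilon> :: real
  assume "\<epsilon> > 0"
  then show "\<exists>C. \<forall>\<alpha> t. t \<ge> 1 \<longrightarrow> norm (tanh_int k \<alpha> (- t)) + norm (tanh_int k \<alpha> t)
                 \<le> C * t * exp (- \<bar>\<alpha>\<bar> * (1/2 - \<epsilon>))"
    using tanh_int_pair_bound[OF entire] by blast
next
  fix \<epsilon> \<beta> C0 c1 c2 :: real
  assume \<epsilon>: "\<epsilon> > 0" and params: "0 < \<beta> \<and> \<beta> \<le> 1 \<and> 0 < c1 \<and> c1 \<le> c2"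
  text \<open>Apply the first part with \<epsilon>' = min (\<epsilon>/2) (1/4), so that g = 1/2 - \<epsilon>' > 0 and
    1 - 2 \<beta> g \<le> 1 + \<epsilon> - \<beta>.\<close>
  define g where "g = 1/2 - min (\<epsilon>/2) (1/4)"
  obtain C where C: "C \<ge> 0" "\<And>\<alpha> t. t \<ge> 1 \<Longrightarrow>
      norm (tanh_int k \<alpha> (- t)) + norm (tanh_int k \<alpha> t) \<le> C * t * exp (- \<bar>\<alpha>\<bar> * g)"
    using tanh_int_pair_bound[OF entire, of "min (\<epsilon>/2) (1/4)"] \<epsilon> unfolding g_def by auto
  have "2 * \<beta> * min (\<epsilon>/2) (1/4) \<le> 2 * 1 * (\<epsilon>/2)"
    using \<epsilon> params by (intro mult_mono) auto
  then have g: "g > 0" "1 - 2 * \<beta> * g \<le> 1 + \<epsilon> - \<beta>"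
    by (auto simp: g_def algebra_simps)
  define M where "M = C * exp (C0 * g) * c2 powr (2 * \<beta> * g)"
  have "norm (tanh_int k (2 * \<beta> * ln T - C0) (- t)) + norm (tanh_int k (2 * \<beta> * ln T - C0) t)
      \<le> M * t powr (1 + \<epsilon> - \<beta>)" if T: "T > 0" "t \<ge> 1" "c1 * T \<le> t" "t \<le> c2 * T" for T t
  proof -
    have "C * (t * exp (- \<bar>2 * \<beta> * ln T - C0\<bar> * g)) \<le> M * t powr (1 - 2 * \<beta> * g)"
      using log_scale_exp_bound[of \<beta> g T t c2] C(1) params g T
      by (simp add: M_def mult_left_mono mult.assoc)
    also have "\<dots> \<le> M * t powr (1 + \<epsilon> - \<beta>)"
      using C(1) g T by (intro mult_left_mono powr_mono) (auto simp: M_def)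
    finally show ?thesis
      using C(2)[OF T(2), of "2 * \<beta> * ln T - C0"] by (simp add: mult.assoc)
  qed
  then show "\<exists>M. \<forall>T t. T > 0 \<and> t \<ge> 1 \<and> c1 * T \<le> t \<and> t \<le> c2 * T \<longrightarrow>
      norm (tanh_int k (2 * \<beta> * ln T - C0) (- t)) + norm (tanh_int k (2 * \<beta> * ln T - C0) t)
        \<le> M * t powr (1 + \<epsilon> - \<beta>)"
    by blast
qed

end
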